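(* Let $k\ge 2$ be an integer and $\sigma^2>0$. Let $X_1,\dots,X_k$ be real-valued random variables with finite second moments (the values of one fixed weight coordinate in the $k$ model instances), and let $$S^2=\frac{1}{k-1}\sum_{u=1}^k\Bigl(X_u-\tfrac1k\textstyle\sum_{v=1}^k X_v\Bigr)^2$$ be their unbiased sample variance. Assume $\mathbb E[S^2]=\frac{k}{2}\sigma^2$. Perform one "draw and discard" update: choose an index $j$ uniformly at random from $\{1,\dots,k\}$, choose an index $l$ uniformly at random from $\{1,\dots,k\}$ (with $j$, $l$ independent of each other and of everything else), draw a noise variable $r$ independent of $(X_1,\dots,X_k,j,l)$ with $\mathbb E[r]=0$ and $\mathrm{Var}(r)=\sigma^2$, and define new values $X'_l=X_j+r$ and $X'_u=X_u$ for $u\neq l$. Then the unbiased sample variance $S'^2$ of $X'_1,\dots,X'_k$ satisfies $\mathbb E[S'^2]=\frac{k}{2}\sigma^2$. Consequently, applying the update repeatedly (with fresh independent $j,l,r$ each time), the expected intra-model sample variance stays equal to $\frac{k}{2}\sigma^2$ after any number of updates; the same holds coordinatewise for vector-valued weights $B=(B_1,\dots,B_p)$ with per-coordinate noise variances $\sigma_i^2$.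
   Context: This models the server side of "Draw and Discard" machine learning: the server keeps $k$ instances of a model; at each step a uniformly random instance is sent to a client, which returns it with independent zero-mean noise added (variance $\sigma^2$ per coordinate), and the returned model overwrites a uniformly random one of the $k$ instances (possibly the one that was drawn). *)

theory Defs
  imports "HOL-Probability.Probability"
begin

definition sample_var :: "('k::finite \<Rightarrow> real) \<Rightarrow> real" where
  "sample_var x = (1 / (real CARD('k) - 1)) *
     (\<Sum>u\<in>UNIV. (x u - (1 / real CARD('k)) * (\<Sum>v\<in>UNIV. x v))\<^sup>2)"

definition dd_update :: "('k \<Rightarrow> real) \<Rightarrow> 'k \<Rightarrow> 'k \<Rightarrow> real \<Rightarrow> ('k \<Rightarrow> real)" where
  "dd_update x j l r = (\<lambda>u. if u = l then x j + r else x u)"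

text \<open>The events generated by a random variable Y with values in N (as in the
  library definition of indep_vars, which is restricted to a single value type; we use it
  to express mutual independence of variables of different types).\<close>
definition gen_events :: "'a measure \<Rightarrow> 'b measure \<Rightarrow> ('a \<Rightarrow> 'b) \<Rightarrow> 'a set set" where
  "gen_events M N Y = {Y -` A \<inter> space M | A. A \<in> sets N}"

end

theory Submission
  imports Defs
begin

(* After drawing instance a, adding noise t and overwriting instance b, the new sample variance
   is a quadratic polynomial in t with leading coefficient 1/k and coefficients depending only on
   (x, a, b). Since j, l, r are independent of X and of each other, the linear term has mean zero,
   the quadratic term contributes E[r^2]/k, and averaging the constant term over the k^2 equally
   likely pairs (j, l) gives (1 - 2/k^2) E[S^2]. So E[S'^2] = (1 - 2/k^2) E[S^2] + sigma^2/k,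
   whose unique fixed point is k sigma^2 / 2. *)

definition sum_squares :: "('k::finite \<Rightarrow> real) \<Rightarrow> real" where
  "sum_squares x = (\<Sum>u\<in>UNIV. (x u)\<^sup>2)"

definition total :: "('k::finite \<Rightarrow> real) \<Rightarrow> real" where
  "total x = (\<Sum>u\<in>UNIV. x u)"

lemma sample_var_eq:
  "sample_var (x :: 'k::finite \<Rightarrow> real) =
     (sum_squares x - (total x)\<^sup>2 / real CARD('k)) / (real CARD('k) - 1)"
proof -
  let ?n = "real CARD('k)" and ?m = "total x / real CARD('k)"
  have "(\<Sum>u\<in>UNIV. (x u - ?m)\<^sup>2) = (\<Sum>u\<in>UNIV. (x u)\<^sup>2 - 2 * ?m * x u + ?m\<^sup>2)"
    by (intro sum.cong) (auto simp: power2_eq_square algebra_simps)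
  also have "\<dots> = sum_squares x - 2 * ?m * total x + ?n * ?m\<^sup>2"
    by (simp add: sum.distrib sum_subtractf sum_distrib_left[symmetric]
        sum_divide_distrib[symmetric] sum_squares_def total_def)
  also have "\<dots> = sum_squares x - (total x)\<^sup>2 / ?n"
    by (simp add: power2_eq_square field_simps)
  finally show ?thesis
    unfolding sample_var_def total_def by (simp add: divide_inverse mult.commute)
qed

lemma total_dd_update: "total (dd_update x a b t) = total x - x b + (x a + t)"
proof -
  have "total (dd_update x a b t) = (\<Sum>u\<in>UNIV. x u + (if u = b then x a + t - x b else 0))"
    unfolding total_def dd_update_def by (intro sum.cong) auto
  then show ?thesis by (simp add: sum.distrib total_def)
qed

lemma sum_squares_dd_update:
  "sum_squares (dd_update x a b t) = sum_squares x - (x b)\<^sup>2 + (x a + t)\<^sup>2"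
proof -
  have "sum_squares (dd_update x a b t) =
      (\<Sum>u\<in>UNIV. (x u)\<^sup>2 + (if u = b then (x a + t)\<^sup>2 - (x b)\<^sup>2 else 0))"
    unfolding sum_squares_def dd_update_def by (intro sum.cong) auto
  then show ?thesis by (simp add: sum.distrib sum_squares_def)
qed

definition dd_const_coeff :: "('k::finite \<Rightarrow> real) \<Rightarrow> 'k \<Rightarrow> 'k \<Rightarrow> real" where
  "dd_const_coeff x a b = sample_var (dd_update x a b 0)"

definition dd_linear_coeff :: "('k::finite \<Rightarrow> real) \<Rightarrow> 'k \<Rightarrow> 'k \<Rightarrow> real" where
  "dd_linear_coeff x a b =
     (2 * x a - 2 * (total x - x b + x a) / real CARD('k)) / (real CARD('k) - 1)"

lemma sample_var_dd_update:
  assumes "CARD('k::finite) \<ge> 2"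
  shows "sample_var (dd_update (x :: 'k \<Rightarrow> real) a b t) =
           dd_const_coeff x a b + dd_linear_coeff x a b * t + t\<^sup>2 / real CARD('k)"
proof -
  define n where "n = real CARD('k)"
  define d where "d = total x - x b + x a"
  have "n > 1" using assms by (simp add: n_def)
  then have "(sum_squares x - (x b)\<^sup>2 + (x a + t)\<^sup>2 - (d + t)\<^sup>2 / n) / (n - 1) =
      (sum_squares x - (x b)\<^sup>2 + (x a)\<^sup>2 - d\<^sup>2 / n) / (n - 1) +
      (2 * x a - 2 * d / n) / (n - 1) * t + t\<^sup>2 / n"
    by (simp add: divide_simps) (simp add: power2_eq_square algebra_simps)
  then show ?thesis
    unfolding dd_const_coeff_def dd_linear_coeff_def sample_var_eq
      sum_squares_dd_update total_dd_update
    by (simp add: n_def d_def add.assoc)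
qed

lemma dd_const_coeff_eq:
  fixes x :: "'k::finite \<Rightarrow> real"
  shows "dd_const_coeff x a b = (sum_squares x - (x b)\<^sup>2 + (x a)\<^sup>2
     - (total x - x b + x a)\<^sup>2 / real CARD('k)) / (real CARD('k) - 1)"
  unfolding dd_const_coeff_def sample_var_eq sum_squares_dd_update total_dd_update by simp

lemma sum_pairs_square_diff:
  fixes x :: "'k::finite \<Rightarrow> real"
  shows "(\<Sum>a\<in>UNIV. \<Sum>b\<in>UNIV. (x a - x b)\<^sup>2) =
     2 * (real CARD('k) * sum_squares x - (total x)\<^sup>2)"
proof -
  have "(\<Sum>a\<in>UNIV. \<Sum>b\<in>UNIV. (x a - x b)\<^sup>2) =
      (\<Sum>a\<in>UNIV. \<Sum>b\<in>UNIV. (x a)\<^sup>2 + (x b)\<^sup>2 - 2 * x a * x b)"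
    by (intro sum.cong refl) (simp add: power2_eq_square algebra_simps)
  also have "\<dots> = (\<Sum>a\<in>UNIV. real CARD('k) * (x a)\<^sup>2 + sum_squares x - 2 * x a * total x)"
    by (simp add: sum.distrib sum_subtractf sum_distrib_left sum_squares_def total_def)
  also have "\<dots> = 2 * (real CARD('k) * sum_squares x - (total x)\<^sup>2)"
    by (simp add: sum.distrib sum_subtractf sum_distrib_left[symmetric] sum_distrib_right[symmetric]
        sum_squares_def total_def power2_eq_square)
  finally show ?thesis .
qed

lemma sum_dd_const_coeff:
  fixes x :: "'k::finite \<Rightarrow> real"
  shows "(\<Sum>a\<in>UNIV. \<Sum>b\<in>UNIV. dd_const_coeff x a b) = ((real CARD('k))\<^sup>2 - 2) * sample_var x"
proof -
  let ?n = "real CARD('k)" and ?Q = "sum_squares x" and ?S = "total x"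
  have diffs: "(\<Sum>a\<in>UNIV. \<Sum>b\<in>UNIV. x a - x b) = 0"
    by (simp add: sum_subtractf sum_distrib_left[symmetric])
  have "(\<Sum>a\<in>UNIV. \<Sum>b\<in>UNIV. (?S - x b + x a)\<^sup>2) =
      (\<Sum>a\<in>UNIV. \<Sum>b\<in>UNIV. ?S\<^sup>2 + 2 * ?S * (x a - x b) + (x a - x b)\<^sup>2)"
    by (intro sum.cong refl) (simp add: power2_eq_square algebra_simps)
  also have "\<dots> = ?n\<^sup>2 * ?S\<^sup>2 + 2 * ?S * (\<Sum>a\<in>UNIV. \<Sum>b\<in>UNIV. x a - x b)
      + (\<Sum>a\<in>UNIV. \<Sum>b\<in>UNIV. (x a - x b)\<^sup>2)"
    by (simp add: sum.distrib sum_distrib_left power2_eq_square)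
  finally have shifted: "(\<Sum>a\<in>UNIV. \<Sum>b\<in>UNIV. (?S - x b + x a)\<^sup>2) =
      ?n\<^sup>2 * ?S\<^sup>2 + 2 * (?n * ?Q - ?S\<^sup>2)"
    by (simp add: diffs sum_pairs_square_diff)
  have "(\<Sum>a\<in>UNIV. \<Sum>b\<in>UNIV. ?Q - (x b)\<^sup>2 + (x a)\<^sup>2) = ?n\<^sup>2 * ?Q"
    by (simp add: sum.distrib sum_subtractf sum_distrib_left[symmetric] sum_squares_def)
      (simp add: algebra_simps power2_eq_square)
  then have "(\<Sum>a\<in>UNIV. \<Sum>b\<in>UNIV. dd_const_coeff x a b) =
      (?n\<^sup>2 * ?Q - (\<Sum>a\<in>UNIV. \<Sum>b\<in>UNIV. (?S - x b + x a)\<^sup>2) / ?n) / (?n - 1)"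
    by (simp add: dd_const_coeff_eq sum_divide_distrib[symmetric] sum_subtractf)
  also have "\<dots> = ((?n\<^sup>2 - 2) * (?Q - ?S\<^sup>2 / ?n)) / (?n - 1)"
    unfolding shifted by (simp add: field_simps power2_eq_square)
  finally show ?thesis unfolding sample_var_eq by simp
qed

lemma sum_indicator_pair:
  fixes y z :: "'k::finite"
  shows "(\<Sum>a\<in>UNIV. \<Sum>b\<in>UNIV. indicator {a} y * indicator {b} z * h a b) = (h y z :: real)"
proof -
  have "(\<Sum>b\<in>UNIV. indicator {a} y * indicator {b} z * h a b) = indicator {a} y * h a z" for a
    by (simp add: indicator_def)
  then show ?thesis
    by (simp add: indicator_def)
qed

lemma integrable_square_add:
  fixes f g :: "'a \<Rightarrow> real"
  assumes [measurable]: "f \<in> borel_measurable M" "g \<in> borel_measurable M"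
    and "integrable M (\<lambda>x. (f x)\<^sup>2)" "integrable M (\<lambda>x. (g x)\<^sup>2)"
  shows "integrable M (\<lambda>x. (f x + g x)\<^sup>2)"
proof (rule Bochner_Integration.integrable_bound)
  show "integrable M (\<lambda>x. 2 * (f x)\<^sup>2 + 2 * (g x)\<^sup>2)"
    using assms(3,4) by simp
  have "(f x + g x)\<^sup>2 \<le> 2 * (f x)\<^sup>2 + 2 * (g x)\<^sup>2" for x
    using zero_le_power2[of "f x - g x"] by (simp add: power2_eq_square algebra_simps)
  then show "AE x in M. norm ((f x + g x)\<^sup>2) \<le> norm (2 * (f x)\<^sup>2 + 2 * (g x)\<^sup>2)"
    by simp
qed measurable

lemma integrable_square_sum:
  fixes f :: "'i \<Rightarrow> 'a \<Rightarrow> real"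
  assumes "finite I"
    and "\<And>i. i \<in> I \<Longrightarrow> f i \<in> borel_measurable M"
    and "\<And>i. i \<in> I \<Longrightarrow> integrable M (\<lambda>x. (f i x)\<^sup>2)"
  shows "integrable M (\<lambda>x. (\<Sum>i\<in>I. f i x)\<^sup>2)"
  using assms
proof (induction I rule: finite_induct)
  case (insert i I)
  then show ?case
    by (simp add: integrable_square_add borel_measurable_sum)
qed simp

lemma gen_events_comp_subset:
  assumes "Y \<in> measurable M N" and "g \<in> measurable N K"
  shows "gen_events M K (\<lambda>\<omega>. g (Y \<omega>)) \<subseteq> gen_events M N Y"
proof
  fix E assume "E \<in> gen_events M K (\<lambda>\<omega>. g (Y \<omega>))"
  then obtain A where A: "A \<in> sets K" and E: "E = (\<lambda>\<omega>. g (Y \<omega>)) -` A \<inter> space M"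
    by (auto simp: gen_events_def)
  have "E = Y -` (g -` A \<inter> space N) \<inter> space M"
    using measurable_space[OF assms(1)] by (auto simp: E)
  moreover have "g -` A \<inter> space N \<in> sets N"
    using measurable_sets[OF assms(2) A] .
  ultimately show "E \<in> gen_events M N Y"
    unfolding gen_events_def by blast
qed

context prob_space
begin

lemma integral_indicator_value:
  assumes "Z \<in> measurable M (count_space UNIV)"
  shows "integrable M (\<lambda>\<omega>. indicator {a} (Z \<omega>) :: real)"
    and "integral\<^sup>L M (\<lambda>\<omega>. indicator {a} (Z \<omega>) :: real) = prob {\<omega>\<in>space M. Z \<omega> = a}"
proof -
  have ev: "{\<omega>\<in>space M. Z \<omega> = a} \<in> events"
    using assms by measurable
  have eq: "\<And>\<omega>. \<omega> \<in> space M \<Longrightarrow> indicator {a} (Z \<omega>) = (indicator {\<omega>\<in>space M. Z \<omega> = a} \<omega> :: real)"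
    by (simp add: indicator_def)
  show "integrable M (\<lambda>\<omega>. indicator {a} (Z \<omega>) :: real)"
    using ev by (subst Bochner_Integration.integrable_cong[OF refl eq])
      (auto intro!: integrable_real_indicator simp: emeasure_finite less_top[symmetric])
  show "integral\<^sup>L M (\<lambda>\<omega>. indicator {a} (Z \<omega>) :: real) = prob {\<omega>\<in>space M. Z \<omega> = a}"
    using ev by (subst Bochner_Integration.integral_cong[OF refl eq]) auto
qed

end

locale draw_and_discard = prob_space M for M :: "'a measure" +
  fixes X :: "'k::finite \<Rightarrow> 'a \<Rightarrow> real" and j l :: "'a \<Rightarrow> 'k" and r :: "'a \<Rightarrow> real"
  assumes X_measurable[measurable]: "\<And>u. X u \<in> borel_measurable M"
    and X_square_integrable: "\<And>u. integrable M (\<lambda>\<omega>. (X u \<omega>)\<^sup>2)"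
    and j_measurable[measurable]: "j \<in> measurable M (count_space UNIV)"
    and l_measurable[measurable]: "l \<in> measurable M (count_space UNIV)"
    and j_uniform: "\<And>i. prob {\<omega>\<in>space M. j \<omega> = i} = 1 / real CARD('k)"
    and l_uniform: "\<And>i. prob {\<omega>\<in>space M. l \<omega> = i} = 1 / real CARD('k)"
    and r_measurable[measurable]: "r \<in> borel_measurable M"
    and r_square_integrable: "integrable M (\<lambda>\<omega>. (r \<omega>)\<^sup>2)"
    and indep: "indep_sets (\<lambda>i.
        [gen_events M (Pi\<^sub>M UNIV (\<lambda>_. borel)) (\<lambda>\<omega>. (\<lambda>u. X u \<omega>)),
         gen_events M (count_space UNIV) j,
         gen_events M (count_space UNIV) l,
         gen_events M borel r] ! i) {..<4}"
begin

lemma X_vector_measurable[measurable]: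
  "(\<lambda>\<omega>. (\<lambda>u. X u \<omega>)) \<in> measurable M (Pi\<^sub>M UNIV (\<lambda>_. borel))"
  by (rule measurable_PiM_single') auto

lemma indep_vars_factors:
  fixes g :: "('k \<Rightarrow> real) \<Rightarrow> real" and h :: "real \<Rightarrow> real"
  assumes [measurable]: "g \<in> borel_measurable (Pi\<^sub>M UNIV (\<lambda>_. borel))" "h \<in> borel_measurable borel"
  shows "indep_vars (\<lambda>_. borel) (\<lambda>i. [\<lambda>\<omega>. g (\<lambda>u. X u \<omega>), \<lambda>\<omega>. indicator {a} (j \<omega>),
           \<lambda>\<omega>. indicator {b} (l \<omega>), \<lambda>\<omega>. h (r \<omega>)] ! i) {..<4}"
  unfolding indep_vars_def2
proof
  have four: "{..<4::nat} = {0, 1, 2, 3}"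
    by (auto simp: eval_nat_numeral lessThan_Suc)
  have indicator_measurable: "(\<lambda>x. indicator {c} x :: real) \<in> measurable (count_space UNIV) borel"
    for c :: 'k by simp
  show "indep_sets (\<lambda>i. {([\<lambda>\<omega>. g (\<lambda>u. X u \<omega>), \<lambda>\<omega>. indicator {a} (j \<omega>),
           \<lambda>\<omega>. indicator {b} (l \<omega>), \<lambda>\<omega>. h (r \<omega>)] ! i) -` A \<inter> space M | A. A \<in> sets borel}) {..<4}"
    using indep
  proof (rule indep_sets_mono_sets)
    fix i :: nat assume "i \<in> {..<4}"
    then show "{([\<lambda>\<omega>. g (\<lambda>u. X u \<omega>), \<lambda>\<omega>. indicator {a} (j \<omega>),
           \<lambda>\<omega>. indicator {b} (l \<omega>), \<lambda>\<omega>. h (r \<omega>)] ! i) -` A \<inter> space M | A. A \<in> sets borel}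
        \<subseteq> [gen_events M (Pi\<^sub>M UNIV (\<lambda>_. borel)) (\<lambda>\<omega>. (\<lambda>u. X u \<omega>)),
           gen_events M (count_space UNIV) j, gen_events M (count_space UNIV) l,
           gen_events M borel r] ! i"
      unfolding four gen_events_def[symmetric]
      using gen_events_comp_subset[OF X_vector_measurable assms(1)]
        gen_events_comp_subset[OF j_measurable indicator_measurable[of a]]
        gen_events_comp_subset[OF l_measurable indicator_measurable[of b]]
        gen_events_comp_subset[OF r_measurable assms(2)]
      by auto
  qed
qed (auto simp: eval_nat_numeral less_Suc_eq)

lemma integral_indicator_pair_mult:
  fixes a b :: 'k and g :: "('k \<Rightarrow> real) \<Rightarrow> real" and h :: "real \<Rightarrow> real"
  assumes [measurable]: "g \<in> borel_measurable (Pi\<^sub>M UNIV (\<lambda>_. borel))" "h \<in> borel_measurable borel"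
    and g_integrable: "integrable M (\<lambda>\<omega>. g (\<lambda>u. X u \<omega>))"
    and h_integrable: "integrable M (\<lambda>\<omega>. h (r \<omega>))"
  defines "F \<equiv> \<lambda>\<omega>. indicator {a} (j \<omega>) * indicator {b} (l \<omega>) * g (\<lambda>u. X u \<omega>) * h (r \<omega>)"
  shows "integrable M F"
    and "integral\<^sup>L M F = integral\<^sup>L M (\<lambda>\<omega>. g (\<lambda>u. X u \<omega>)) * integral\<^sup>L M (\<lambda>\<omega>. h (r \<omega>))
          / (real CARD('k))\<^sup>2"
proof -
  define Y where "Y = (\<lambda>i. [\<lambda>\<omega>. g (\<lambda>u. X u \<omega>), \<lambda>\<omega>. indicator {a} (j \<omega>),
      \<lambda>\<omega>. indicator {b} (l \<omega>), \<lambda>\<omega>. h (r \<omega>)] ! i)"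
  have indep_Y: "indep_vars (\<lambda>_. borel) Y {..<4}"
    unfolding Y_def by (rule indep_vars_factors) measurable
  have integrable_Y: "integrable M (Y i)" if "i \<in> {..<4}" for i
    using that g_integrable h_integrable integral_indicator_value(1)[OF j_measurable]
      integral_indicator_value(1)[OF l_measurable]
    by (auto simp: Y_def eval_nat_numeral less_Suc_eq)
  have F_eq: "F = (\<lambda>\<omega>. \<Prod>i<4. Y i \<omega>)"
    by (simp add: F_def Y_def eval_nat_numeral lessThan_Suc mult_ac)
  show "integrable M F"
    unfolding F_eq using indep_vars_integrable[OF _ indep_Y integrable_Y] by simp
  show "integral\<^sup>L M F = integral\<^sup>L M (\<lambda>\<omega>. g (\<lambda>u. X u \<omega>)) * integral\<^sup>L M (\<lambda>\<omega>. h (r \<omega>))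
          / (real CARD('k))\<^sup>2"
    unfolding F_eq using indep_vars_lebesgue_integral[OF _ indep_Y integrable_Y]
    by (simp add: Y_def eval_nat_numeral lessThan_Suc integral_indicator_value(2) j_uniform
        l_uniform power2_eq_square)
qed

lemma dd_const_coeff_measurable[measurable]:
  "(\<lambda>x. dd_const_coeff x a b) \<in> borel_measurable (Pi\<^sub>M UNIV (\<lambda>_. borel :: real measure))"
  unfolding dd_const_coeff_eq sum_squares_def total_def by measurable

lemma dd_linear_coeff_measurable[measurable]:
  "(\<lambda>x. dd_linear_coeff x a b) \<in> borel_measurable (Pi\<^sub>M UNIV (\<lambda>_. borel :: real measure))"
  unfolding dd_linear_coeff_def total_def by measurable

lemma square_integrable_shifted_total:
  "integrable M (\<lambda>\<omega>. (total (\<lambda>u. X u \<omega>) - X b \<omega> + X a \<omega>)\<^sup>2)"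
proof -
  have "integrable M (\<lambda>\<omega>. (X a \<omega> + - X b \<omega>)\<^sup>2)"
    by (rule integrable_square_add) (simp_all add: X_square_integrable)
  then have "integrable M (\<lambda>\<omega>. (total (\<lambda>u. X u \<omega>) + (X a \<omega> + - X b \<omega>))\<^sup>2)"
    unfolding total_def
    by (intro integrable_square_add integrable_square_sum) (auto simp: X_square_integrable)
  then show ?thesis
    by (simp add: algebra_simps)
qed

lemma integrable_dd_const_coeff: "integrable M (\<lambda>\<omega>. dd_const_coeff (\<lambda>u. X u \<omega>) a b)"
  unfolding dd_const_coeff_eq sum_squares_def
  using square_integrable_shifted_total X_square_integrable by auto

lemma integrable_dd_linear_coeff: "integrable M (\<lambda>\<omega>. dd_linear_coeff (\<lambda>u. X u \<omega>) a b)"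
proof -
  have "integrable M (\<lambda>\<omega>. total (\<lambda>u. X u \<omega>) - X b \<omega> + X a \<omega>)"
    by (rule square_integrable_imp_integrable[OF _ square_integrable_shifted_total])
      (simp add: total_def)
  moreover have "integrable M (X a)"
    by (rule square_integrable_imp_integrable[OF _ X_square_integrable]) simp
  ultimately show ?thesis
    unfolding dd_linear_coeff_def
    by (intro Bochner_Integration.integrable_divide_zero Bochner_Integration.integrable_diff
        Bochner_Integration.integrable_mult_right)
qed

lemma expectation_dd_term:
  fixes a b :: 'k
  assumes r_mean: "expectation r = 0"
  defines "T \<equiv> \<lambda>\<omega>. indicator {a} (j \<omega>) * indicator {b} (l \<omega>) *
     (dd_const_coeff (\<lambda>u. X u \<omega>) a b + dd_linear_coeff (\<lambda>u. X u \<omega>) a b * r \<omega>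
      + (r \<omega>)\<^sup>2 / real CARD('k))"
  shows "integrable M T"
    and "expectation T = (expectation (\<lambda>\<omega>. dd_const_coeff (\<lambda>u. X u \<omega>) a b)
           + expectation (\<lambda>\<omega>. (r \<omega>)\<^sup>2) / real CARD('k)) / (real CARD('k))\<^sup>2"
proof -
  have square_measurable: "(\<lambda>t::real. t\<^sup>2 / real CARD('k)) \<in> borel_measurable borel"
    by measurable
  have r_integrable: "integrable M r"
    by (rule square_integrable_imp_integrable[OF r_measurable r_square_integrable])
  have const: "integrable M (\<lambda>\<omega>. indicator {a} (j \<omega>) * indicator {b} (l \<omega>) *
        dd_const_coeff (\<lambda>u. X u \<omega>) a b * 1)"
      "expectation (\<lambda>\<omega>. indicator {a} (j \<omega>) * indicator {b} (l \<omega>) *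
        dd_const_coeff (\<lambda>u. X u \<omega>) a b * 1) =
       expectation (\<lambda>\<omega>. dd_const_coeff (\<lambda>u. X u \<omega>) a b) / (real CARD('k))\<^sup>2"
    using integral_indicator_pair_mult[where g = "\<lambda>x. dd_const_coeff x a b" and h = "\<lambda>_. 1",
        OF dd_const_coeff_measurable borel_measurable_const integrable_dd_const_coeff integrable_const]
    by (simp_all add: prob_space)
  have linear: "integrable M (\<lambda>\<omega>. indicator {a} (j \<omega>) * indicator {b} (l \<omega>) *
        dd_linear_coeff (\<lambda>u. X u \<omega>) a b * r \<omega>)"
      "expectation (\<lambda>\<omega>. indicator {a} (j \<omega>) * indicator {b} (l \<omega>) *
        dd_linear_coeff (\<lambda>u. X u \<omega>) a b * r \<omega>) = 0"
    using integral_indicator_pair_mult[where g = "\<lambda>x. dd_linear_coeff x a b" and h = "\<lambda>t. t",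
        OF dd_linear_coeff_measurable measurable_id integrable_dd_linear_coeff r_integrable] r_mean
    by (simp_all add: prob_space)
  have noise: "integrable M (\<lambda>\<omega>. indicator {a} (j \<omega>) * indicator {b} (l \<omega>) * 1 *
        ((r \<omega>)\<^sup>2 / real CARD('k)))"
      "expectation (\<lambda>\<omega>. indicator {a} (j \<omega>) * indicator {b} (l \<omega>) * 1 *
        ((r \<omega>)\<^sup>2 / real CARD('k))) =
       expectation (\<lambda>\<omega>. (r \<omega>)\<^sup>2) / real CARD('k) / (real CARD('k))\<^sup>2"
    using integral_indicator_pair_mult[where g = "\<lambda>_. 1" and h = "\<lambda>t. t\<^sup>2 / real CARD('k)",
        OF borel_measurable_const square_measurable integrable_const
          integrable_divide_zero[OF r_square_integrable]]
    by (simp_all add: prob_space)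
  have T_eq: "T = (\<lambda>\<omega>. indicator {a} (j \<omega>) * indicator {b} (l \<omega>) * dd_const_coeff (\<lambda>u. X u \<omega>) a b * 1
      + indicator {a} (j \<omega>) * indicator {b} (l \<omega>) * dd_linear_coeff (\<lambda>u. X u \<omega>) a b * r \<omega>
      + indicator {a} (j \<omega>) * indicator {b} (l \<omega>) * 1 * ((r \<omega>)\<^sup>2 / real CARD('k)))"
    unfolding T_def by (simp add: distrib_left mult.assoc)
  show "integrable M T"
    unfolding T_eq using const(1) linear(1) noise(1) by (intro Bochner_Integration.integrable_add)
  show "expectation T = (expectation (\<lambda>\<omega>. dd_const_coeff (\<lambda>u. X u \<omega>) a b)
           + expectation (\<lambda>\<omega>. (r \<omega>)\<^sup>2) / real CARD('k)) / (real CARD('k))\<^sup>2"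
    unfolding T_eq using const linear noise
    by (simp add: Bochner_Integration.integrable_add add_divide_distrib)
qed

lemma expectation_sample_var_dd_update:
  assumes k: "CARD('k) \<ge> 2" and r_mean: "expectation r = 0"
  shows "expectation (\<lambda>\<omega>. sample_var (dd_update (\<lambda>u. X u \<omega>) (j \<omega>) (l \<omega>) (r \<omega>))) =
     (1 - 2 / (real CARD('k))\<^sup>2) * expectation (\<lambda>\<omega>. sample_var (\<lambda>u. X u \<omega>))
     + expectation (\<lambda>\<omega>. (r \<omega>)\<^sup>2) / real CARD('k)"
proof -
  let ?n = "real CARD('k)" and ?c0 = "\<lambda>a b \<omega>. dd_const_coeff (\<lambda>u. X u \<omega>) a b"
  define T where "T a b \<omega> = indicator {a} (j \<omega>) * indicator {b} (l \<omega>) *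
     (dd_const_coeff (\<lambda>u. X u \<omega>) a b + dd_linear_coeff (\<lambda>u. X u \<omega>) a b * r \<omega> + (r \<omega>)\<^sup>2 / ?n)"
    for a b \<omega>
  have pointwise: "sample_var (dd_update (\<lambda>u. X u \<omega>) (j \<omega>) (l \<omega>) (r \<omega>)) =
      (\<Sum>a\<in>UNIV. \<Sum>b\<in>UNIV. T a b \<omega>)" for \<omega>
    unfolding T_def sum_indicator_pair by (rule sample_var_dd_update[OF k])
  have T_integrable: "integrable M (T a b)" for a b
    unfolding T_def by (rule expectation_dd_term(1)[OF r_mean])
  have "expectation (\<lambda>\<omega>. sample_var (dd_update (\<lambda>u. X u \<omega>) (j \<omega>) (l \<omega>) (r \<omega>))) =
      (\<Sum>a\<in>UNIV. \<Sum>b\<in>UNIV. expectation (T a b))"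
    unfolding pointwise using T_integrable
    by (simp add: Bochner_Integration.integral_sum Bochner_Integration.integrable_sum)
  also have "\<dots> = (\<Sum>a\<in>UNIV. \<Sum>b\<in>UNIV. expectation (?c0 a b)) / ?n\<^sup>2
      + expectation (\<lambda>\<omega>. (r \<omega>)\<^sup>2) / ?n"
    unfolding T_def expectation_dd_term(2)[OF r_mean]
    by (simp add: add_divide_distrib sum.distrib sum_divide_distrib[symmetric] power2_eq_square)
  also have "(\<Sum>a\<in>UNIV. \<Sum>b\<in>UNIV. expectation (?c0 a b)) =
      expectation (\<lambda>\<omega>. \<Sum>a\<in>UNIV. \<Sum>b\<in>UNIV. ?c0 a b \<omega>)"
    using integrable_dd_const_coeff
    by (simp add: Bochner_Integration.integral_sum Bochner_Integration.integrable_sum)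
  also have "\<dots> = (?n\<^sup>2 - 2) * expectation (\<lambda>\<omega>. sample_var (\<lambda>u. X u \<omega>))"
    by (simp add: sum_dd_const_coeff)
  finally show ?thesis
    using k by (simp add: field_simps)
qed

end

theorem theorem1:
  fixes M :: "'a measure"
    and X :: "'k::finite \<Rightarrow> 'a \<Rightarrow> real"
    and j l :: "'a \<Rightarrow> 'k"
    and r :: "'a \<Rightarrow> real"
    and s2 :: real
  assumes M: "prob_space M"
    and k: "CARD('k) \<ge> 2"
    and s2: "s2 > 0"
    and X_meas: "\<And>u. X u \<in> borel_measurable M"
    and X_sq: "\<And>u. integrable M (\<lambda>\<omega>. (X u \<omega>)\<^sup>2)"
    and S2: "integral\<^sup>L M (\<lambda>\<omega>. sample_var (\<lambda>u. X u \<omega>)) = real CARD('k) / 2 * s2"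
    and j_meas: "j \<in> measurable M (count_space UNIV)"
    and l_meas: "l \<in> measurable M (count_space UNIV)"
    and j_unif: "\<And>i. measure M {\<omega>\<in>space M. j \<omega> = i} = 1 / real CARD('k)"
    and l_unif: "\<And>i. measure M {\<omega>\<in>space M. l \<omega> = i} = 1 / real CARD('k)"
    and r_meas: "r \<in> borel_measurable M"
    and r_sq: "integrable M (\<lambda>\<omega>. (r \<omega>)\<^sup>2)"
    and r_mean: "integral\<^sup>L M r = 0"
    and r_var: "integral\<^sup>L M (\<lambda>\<omega>. (r \<omega> - integral\<^sup>L M r)\<^sup>2) = s2"
    and indep: "prob_space.indep_sets M (\<lambda>i.
        [gen_events M (Pi\<^sub>M UNIV (\<lambda>_. borel)) (\<lambda>\<omega>. (\<lambda>u. X u \<omega>)),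
         gen_events M (count_space UNIV) j,
         gen_events M (count_space UNIV) l,
         gen_events M borel r] ! i) {..<4}"
  shows "integral\<^sup>L M (\<lambda>\<omega>. sample_var (dd_update (\<lambda>u. X u \<omega>) (j \<omega>) (l \<omega>) (r \<omega>)))
           = real CARD('k) / 2 * s2"
proof -
  interpret prob_space M
    by (rule M)
  interpret draw_and_discard M X j l r
    by unfold_locales (fact X_meas X_sq j_meas l_meas j_unif l_unif r_meas r_sq indep)+
  have noise_second_moment: "expectation (\<lambda>\<omega>. (r \<omega>)\<^sup>2) = s2"
    using r_var by (simp add: r_mean)
  show ?thesis
    unfolding expectation_sample_var_dd_update[OF k r_mean] S2 noise_second_moment
    by (simp add: field_simps power2_eq_square)
qed

end
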